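(* Let $X,Y\in L^\infty$ and let $\mathcal{G}\subseteq\mathcal{F}$ be a sub-$\sigma$-field. Then $D_H(\mathbb{E}[X\mid\mathcal{G}],\mathbb{E}[Y\mid\mathcal{G}])\le\|X-Y\|_\infty$.
   Context: $\mathbb{K}$ is a local field with non-archimedean absolute value $|\cdot|$ satisfying $|x|=0 \iff x=0$, $|xy|=|x||y|$, $|x+y|\le|x|\vee|y|$. $(\Omega,\mathcal{F},\mathbb{P})$ is a probability space; all (in)equalities are a.s. $L^\infty$ is the space of $\mathbb{K}$-valued random variables $X$ with $\|X\|_\infty:=\operatorname{ess\,sup}|X|<\infty$; $L^\infty(\mathcal{G})$ its $\mathcal{G}$-measurable subspace. For a non-negative real random variable $S$, $\operatorname{ess\,sup}\{S\mid\mathcal{G}\}:=\sup_{p\ge1}\mathbb{E}[S^p\mid\mathcal{G}]^{1/p}$ (usual real conditional expectation), $\|X\|_\mathcal{G}:=\operatorname{ess\,sup}\{|X|\mid\mathcal{G}\}$, and the conditional expectation is the set $\mathbb{E}[X\mid\mathcal{G}]:=\{Y\in L^\infty(\mathcal{G}): \|X-Y\|_\mathcal{G}\le\|X-Z\|_\mathcal{G}\text{ for all }Z\in L^\infty(\mathcal{G})\}$. For subsets $A,B\subseteq L^\infty$, $D_H(A,B):=\sup_{U\in A}\inf_{V\in B}\|U-V\|_\infty\vee\sup_{V\in B}\inf_{U\in A}\|V-U\|_\infty$. *)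

theory Defs
  imports "HOL-Probability.Probability"
begin

definition nonarch_abs :: "('k::field \<Rightarrow> real) \<Rightarrow> bool" where
  "nonarch_abs nm \<longleftrightarrow>
     (\<forall>x. nm x = 0 \<longleftrightarrow> x = 0) \<and>
     (\<forall>x y. nm (x * y) = nm x * nm y) \<and>
     (\<forall>x y. nm (x + y) \<le> max (nm x) (nm y))"

text \<open>The field 'k (carrying its metric topology) is a local field with respect to nm:
  the metric is induced by nm, nm is non-trivial (non-discrete topology), and 'k is
  locally compact.\<close>
definition local_field_abs :: "('k::{field, metric_space} \<Rightarrow> real) \<Rightarrow> bool" where
  "local_field_abs nm \<longleftrightarrow>
     nonarch_abs nm \<and>
     (\<forall>x y. dist x y = nm (x - y)) \<and>
     (\<exists>x. nm x \<noteq> 0 \<and> nm x \<noteq> 1) \<and>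
     (\<exists>e>0. compact (cball (0::'k) e))"

definition norm_inf :: "'a measure \<Rightarrow> ('k \<Rightarrow> real) \<Rightarrow> ('a \<Rightarrow> 'k) \<Rightarrow> ereal" where
  "norm_inf M nm X = esssup M (\<lambda>\<omega>. ereal (nm (X \<omega>)))"

text \<open>\<open>L\<^sup>\<infinity>(\<G>)\<close>: essentially bounded \<G>-measurable random variables
  (with \<G> = M this is \<open>L\<^sup>\<infinity>\<close>).\<close>
definition Linf :: "'a measure \<Rightarrow> 'a measure \<Rightarrow> ('k::topological_space \<Rightarrow> real) \<Rightarrow> ('a \<Rightarrow> 'k) set" where
  "Linf M G nm = {X. X \<in> borel_measurable G \<and> norm_inf M nm X < \<infinity>}"

definition cond_ess_sup :: "'a measure \<Rightarrow> 'a measure \<Rightarrow> ('a \<Rightarrow> real) \<Rightarrow> 'a \<Rightarrow> real" where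
  "cond_ess_sup M G S = (\<lambda>\<omega>. SUP p\<in>{1::nat..}. (real_cond_exp M G (\<lambda>x. S x ^ p) \<omega>) powr (1 / real p))"

definition cond_norm :: "'a measure \<Rightarrow> 'a measure \<Rightarrow> ('k \<Rightarrow> real) \<Rightarrow> ('a \<Rightarrow> 'k) \<Rightarrow> 'a \<Rightarrow> real" where
  "cond_norm M G nm X = cond_ess_sup M G (\<lambda>\<omega>. nm (X \<omega>))"

text \<open>The conditional expectation as a set of best \<G>-approximations.\<close>
definition cond_exp_set :: "'a measure \<Rightarrow> 'a measure \<Rightarrow> ('k::{field, topological_space} \<Rightarrow> real) \<Rightarrow> ('a \<Rightarrow> 'k) \<Rightarrow> ('a \<Rightarrow> 'k) set" where
  "cond_exp_set M G nm X =
     {Y \<in> Linf M G nm. \<forall>Z \<in> Linf M G nm.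
        AE \<omega> in M. cond_norm M G nm (\<lambda>x. X x - Y x) \<omega> \<le> cond_norm M G nm (\<lambda>x. X x - Z x) \<omega>}"

definition hausdorff_dist :: "'a measure \<Rightarrow> ('k::field \<Rightarrow> real) \<Rightarrow> ('a \<Rightarrow> 'k) set \<Rightarrow> ('a \<Rightarrow> 'k) set \<Rightarrow> ereal" where
  "hausdorff_dist M nm A B =
     max (SUP U\<in>A. INF V\<in>B. norm_inf M nm (\<lambda>x. U x - V x))
         (SUP V\<in>B. INF U\<in>A. norm_inf M nm (\<lambda>x. V x - U x))"

end

theory Submission
  imports Defs
begin

text \<open>
  The conditional distance \<open>cdist X Z = ess sup{|X - Z| | G}\<close> satisfies the ultrametric
  inequality almost surely, is local on sets of \<open>G\<close>, equals \<open>|X - Z|\<close> when \<open>X\<close> and \<open>Z\<close> are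
  \<open>G\<close>-measurable, and takes its values in the value set of the absolute value, which is
  discrete away from \<open>0\<close>.

  Let \<open>U \<in> E[X | G]\<close> and \<open>V0 \<in> E[Y | G]\<close> be best approximations. The variable that equals \<open>U\<close>
  where \<open>|U - V0| \<le> cdist Y V0\<close> and \<open>V0\<close> elsewhere is again a best approximation of \<open>Y\<close>,
  and the ultrametric inequality bounds its distance to \<open>U\<close> by \<open>\<parallel>X - Y\<parallel>\<^sub>\<infinity>\<close>. This gives both
  halves of the Hausdorff distance, once best approximations are known to exist. For existence,
  take a dense sequence \<open>d n\<close> and at each point the first \<open>d n\<close> whose conditional distance to
  \<open>X\<close> is within \<open>1 / (k + 1)\<close> of the infimum; the ultrametric inequality and discreteness
  of the values make these choices converge as \<open>k \<rightarrow> \<infinity>\<close>.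
\<close>

lemma LEAST_less_INF_add:
  fixes h :: "nat \<Rightarrow> real"
  assumes "\<And>n. 0 \<le> h n" "0 < e"
  shows "h (LEAST n. h n < (INF n. h n) + e) < (INF n. h n) + e"
proof (rule LeastI_ex)
  have "bdd_below (range h)"
    using assms(1) by (auto intro: bdd_belowI[of _ 0])
  then show "\<exists>n. h n < (INF n. h n) + e"
    using assms(2) cINF_less_iff[of UNIV h "(INF n. h n) + e"] by auto
qed

lemma power_powr_inverse:
  fixes K :: real
  assumes "0 \<le> K" "1 \<le> p"
  shows "(K ^ p) powr (1 / real p) = K"
proof (cases "K = 0")
  case False
  with assms have "K ^ p = K powr real p"
    by (simp add: powr_realpow)
  with assms show ?thesis
    by (simp add: powr_powr)
qed (use assms in simp)

lemma power2_powr_double: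
  fixes y :: real
  assumes "0 \<le> y" "1 \<le> p"
  shows "(y\<^sup>2) powr (1 / real (2 * p)) = y powr (1 / real p)"
proof (cases "y = 0")
  case False
  with assms have "y\<^sup>2 = y powr 2"
    by (simp add: powr_realpow)
  then have "(y\<^sup>2) powr (1 / real (2 * p)) = y powr (2 * (1 / real (2 * p)))"
    by (simp add: powr_powr)
  also have "2 * (1 / real (2 * p)) = 1 / real p"
    by simp
  finally show ?thesis .
qed (use assms in simp)

lemma tendsto_two_powr_root_mult:
  assumes "1 \<le> p"
  shows "(\<lambda>j. 2 powr (1 / real (2 ^ j * p)) * m) \<longlonglongrightarrow> (m::real)"
proof -
  have "strict_mono (\<lambda>j::nat. 2 ^ j * p)"
    using assms by (auto simp: strict_mono_def)
  from LIMSEQ_subseq_LIMSEQ[OF lim_1_over_n this]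
  have "(\<lambda>j. 1 / real (2 ^ j * p)) \<longlonglongrightarrow> 0"
    by (simp add: o_def)
  then have "(\<lambda>j. 2 powr (1 / real (2 ^ j * p)) * m) \<longlonglongrightarrow> 2 powr 0 * m"
    by (intro tendsto_intros) auto
  then show ?thesis
    by simp
qed

lemma le_if_mult_powr_root_le:
  fixes t c P :: real
  assumes "0 < P" and le: "\<And>p. 1 \<le> p \<Longrightarrow> t * P powr (1 / real p) \<le> c"
  shows "t \<le> c"
proof -
  have "(\<lambda>n. t * P powr (1 / real n)) \<longlonglongrightarrow> t * P powr 0"
    using \<open>0 < P\<close> by (intro tendsto_intros lim_1_over_n) auto
  then have "(\<lambda>n. t * P powr (1 / real n)) \<longlonglongrightarrow> t"
    using \<open>0 < P\<close> by simp
  then show ?thesis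
    by (rule LIMSEQ_le_const2) (use le in \<open>auto intro!: exI[of _ 1]\<close>)
qed

lemma le_if_le_max_tendsto:
  fixes z :: "nat \<Rightarrow> 'b::metric_space" and c m :: real
  assumes "0 \<le> m" and lim: "z \<longlonglongrightarrow> l"
    and le: "\<And>k. c \<le> max (m + 1 / Suc k) (dist (z k) l)"
  shows "c \<le> m"
proof -
  have "(\<lambda>k. max (m + 1 / Suc k) (dist (z k) l)) \<longlonglongrightarrow> max (m + 0) (dist l l)"
    by (intro tendsto_intros lim LIMSEQ_Suc[OF lim_1_over_n])
  then have "c \<le> max (m + 0) (dist l l)"
    by (rule LIMSEQ_le_const) (use le in blast)
  with \<open>0 \<le> m\<close> show ?thesis
    by simp
qed

section \<open>Non-archimedean local fields\<close>

locale local_field =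
  fixes nm :: "'k::{field, metric_space, second_countable_topology} \<Rightarrow> real"
  assumes local_field_abs: "local_field_abs nm"
begin

lemma nm_dist: "dist x y = nm (x - y)"
  using local_field_abs by (simp add: local_field_abs_def)

lemma nm_nonneg [simp]: "0 \<le> nm x"
  by (metis nm_dist diff_zero zero_le_dist)

lemma nm_eq_0_iff [simp]: "nm x = 0 \<longleftrightarrow> x = 0"
  using local_field_abs by (simp add: local_field_abs_def nonarch_abs_def)

lemma nm_zero [simp]: "nm 0 = 0"
  by simp

lemma nm_pos_iff [simp]: "0 < nm x \<longleftrightarrow> x \<noteq> 0"
  using nm_nonneg[of x] nm_eq_0_iff[of x] by linarith

lemma nm_mult: "nm (x * y) = nm x * nm y"
  using local_field_abs by (simp add: local_field_abs_def nonarch_abs_def)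

lemma nm_add_le_max: "nm (x + y) \<le> max (nm x) (nm y)"
  using local_field_abs by (simp add: local_field_abs_def nonarch_abs_def)

lemma nm_one [simp]: "nm 1 = 1"
  using nm_mult[of 1 1] nm_eq_0_iff[of 1] by simp

lemma nm_minus [simp]: "nm (- x) = nm x"
proof -
  have "nm (-1) * nm (-1) = 1"
    using nm_mult[of "-1" "-1"] by simp
  then have "nm (-1) = 1"
    using nm_nonneg[of "-1"] by (simp add: square_eq_1_iff)
  then show ?thesis
    using nm_mult[of "-1" x] by simp
qed

lemma nm_minus_commute: "nm (x - y) = nm (y - x)"
  by (metis minus_diff_eq nm_minus)

lemma nm_diff_le_max: "nm (x - y) \<le> max (nm (x - z)) (nm (z - y))"
  using nm_add_le_max[of "x - z" "z - y"] by simp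

lemma nm_eq_if_nm_diff_less:
  assumes "nm (x - y) < nm y"
  shows "nm x = nm y"
proof -
  have "nm x \<le> max (nm (x - y)) (nm y)" "nm y \<le> max (nm (y - x)) (nm x)"
    using nm_diff_le_max[of x 0 y] nm_diff_le_max[of y 0 x] by simp_all
  then show ?thesis
    using assms nm_minus_commute[of x y] by (auto simp: max_def split: if_splits)
qed

lemma nm_inverse: "nm (inverse x) = inverse (nm x)"
proof (cases "x = 0")
  case False
  then show ?thesis
    using nm_mult[of x "inverse x"] by (simp add: field_simps)
qed simp

lemma nm_power: "nm (x ^ n) = nm x ^ n"
  by (induction n) (simp_all add: nm_mult)

lemma dist_add_right: "dist (x + c) (y + c) = dist x y" for x y c :: 'k
  by (simp add: nm_dist)

lemma continuous_on_nm: "continuous_on UNIV nm"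
proof -
  have "nm = (\<lambda>x. dist x 0)"
    by (simp add: nm_dist fun_eq_iff)
  then show ?thesis
    by (auto intro!: continuous_intros)
qed

lemma borel_measurable_nm [measurable]:
  "f \<in> borel_measurable N \<Longrightarrow> (\<lambda>x. nm (f x)) \<in> borel_measurable N"
  using borel_measurable_continuous_on[OF continuous_on_nm] by blast

text \<open>\<open>'k\<close> is not assumed to be a topological ring; continuity of subtraction comes from
  the ultrametric inequality.\<close>
lemma lipschitz_on_diff: "lipschitz_on 1 UNIV (\<lambda>p::'k \<times> 'k. fst p - snd p)"
proof (rule lipschitz_onI)
  fix p q :: "'k \<times> 'k"
  have "nm ((fst p - snd p) - (fst q - snd q)) = nm ((fst p - fst q) - (snd p - snd q))"
    by (simp add: algebra_simps)
  also have "\<dots> \<le> max (nm (fst p - fst q)) (nm (0 - (snd p - snd q)))"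
    using nm_diff_le_max[of "fst p - fst q" "snd p - snd q" 0] by simp
  also have "\<dots> = max (dist (fst p) (fst q)) (dist (snd p) (snd q))"
    by (simp add: nm_dist nm_minus_commute[of "snd p"])
  also have "\<dots> \<le> dist p q"
    by (simp add: dist_fst_le dist_snd_le)
  finally show "dist (fst p - snd p) (fst q - snd q) \<le> 1 * dist p q"
    by (simp add: nm_dist)
qed simp

lemma borel_measurable_diff_field [measurable]:
  fixes f g :: "'b \<Rightarrow> 'k"
  assumes "f \<in> borel_measurable N" "g \<in> borel_measurable N"
  shows "(\<lambda>x. f x - g x) \<in> borel_measurable N"
  using borel_measurable_continuous_Pair[OF assms, of "\<lambda>x y. x - y"]
    lipschitz_on_continuous_on[OF lipschitz_on_diff] by simp

lemma exists_nm_between_0_1: "\<exists>z. 0 < nm z \<and> nm z < 1"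
proof -
  obtain x where x: "nm x \<noteq> 0" "nm x \<noteq> 1"
    using local_field_abs by (auto simp: local_field_abs_def)
  show ?thesis
  proof (cases "nm x < 1")
    case True
    then show ?thesis
      using x nm_nonneg[of x] by (metis order_le_less)
  next
    case False
    then show ?thesis
      using x nm_nonneg[of x] by (intro exI[of _ "inverse x"]) (auto simp: nm_inverse inverse_less_1_iff)
  qed
qed

lemma exists_nm_less: "0 < e \<Longrightarrow> \<exists>z. 0 < nm z \<and> nm z < e"
proof -
  assume "0 < e"
  obtain z where z: "0 < nm z" "nm z < 1"
    using exists_nm_between_0_1 by blast
  obtain n where "nm z ^ n < e"
    using real_arch_pow_inv[OF \<open>0 < e\<close> z(2)] by blast
  then show ?thesis
    using z by (intro exI[of _ "z ^ n"]) (simp add: nm_power)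
qed

lemma exists_nm_greater: "\<exists>z. R < nm z"
proof -
  have "0 < inverse (max R 1)"
    by simp
  then obtain z where z: "0 < nm z" "nm z < inverse (max R 1)"
    using exists_nm_less by blast
  then have "max R 1 < inverse (nm z)"
    using less_imp_inverse_less[OF z(2) z(1)] by simp
  then show ?thesis
    by (intro exI[of _ "inverse z"]) (simp add: nm_inverse)
qed

lemma Cauchy_imp_convergent:
  fixes f :: "nat \<Rightarrow> 'k"
  assumes "Cauchy f"
  shows "convergent f"
proof -
  obtain e where e: "0 < e" "compact (cball (0::'k) e)"
    using local_field_abs by (auto simp: local_field_abs_def)
  obtain N where N: "\<And>n. N \<le> n \<Longrightarrow> dist (f n) (f N) < e"
    using \<open>Cauchy f\<close> e(1) unfolding Cauchy_def by (meson order_refl)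
  define g where "g n = f (n + N) - f N" for n
  have "\<forall>n. g n \<in> cball 0 e"
    using N by (simp add: g_def nm_dist nm_minus_commute[of "f N"] less_imp_le)
  then obtain l r where r: "strict_mono r" "(g \<circ> r) \<longlonglongrightarrow> l"
    using seq_compactE[OF compact_imp_seq_compact[OF e(2)]] by blast
  have "dist (f (r n + N)) (l + f N) = dist ((g \<circ> r) n) l" for n
    using dist_add_right[of "(g \<circ> r) n" "f N" l] by (simp add: g_def)
  then have "(f \<circ> (\<lambda>n. r n + N)) \<longlonglongrightarrow> l + f N"
    using r(2) unfolding lim_sequentially by (simp add: o_def)
  moreover have "strict_mono (\<lambda>n. r n + N)"
    using r(1) by (simp add: strict_mono_def)
  ultimately show ?thesis
    using Cauchy_converges_subseq[OF \<open>Cauchy f\<close>] by (auto simp: convergent_def)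
qed

lemma Cauchy_if_nm_diff_le_max:
  fixes a :: "nat \<Rightarrow> 'k" and b :: "nat \<Rightarrow> real"
  assumes le: "\<And>k j. nm (a k - a j) \<le> max (b k) (b j)" and small: "\<And>k. b k < 1 / Suc k"
  shows "Cauchy a"
proof (rule metric_CauchyI)
  fix e :: real
  assume "0 < e"
  then obtain K where K: "1 / Suc K < e"
    using nat_approx_posE by blast
  have "dist (a k) (a j) < e" if "K \<le> k" "K \<le> j" for k j
  proof -
    have "dist (a k) (a j) \<le> max (b k) (b j)"
      using le by (simp add: nm_dist)
    also have "\<dots> < max (1 / Suc k) (1 / Suc j)"
      using small[of k] small[of j] by auto
    also have "\<dots> \<le> 1 / Suc K"
      using that by (auto intro!: divide_left_mono)
    finally show ?thesis
      using K by linarith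
  qed
  then show "\<exists>K. \<forall>k\<ge>K. \<forall>j\<ge>K. dist (a k) (a j) < e"
    by blast
qed

lemma finite_nm_values_compact_ball:
  assumes e: "compact (cball (0::'k) e)" and a: "0 < a"
  shows "finite {v \<in> range nm. a \<le> v \<and> v \<le> e}"
proof (rule ccontr)
  let ?S = "{v \<in> range nm. a \<le> v \<and> v \<le> e}"
  assume "infinite ?S"
  then obtain f :: "nat \<Rightarrow> real" where f: "inj f" "range f \<subseteq> ?S"
    using infinite_countable_subset by blast
  then have f_range: "f n \<in> range nm" and f_bounds: "a \<le> f n" "f n \<le> e" for n
    by auto
  define x where "x n = inv nm (f n)" for n
  have x: "f n = nm (x n)" for n
    using f_range by (simp add: x_def f_inv_into_f)
  have "\<forall>n. x n \<in> cball 0 e"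
    using x f_bounds by (simp add: nm_dist)
  then obtain l r where r: "strict_mono r" "(x \<circ> r) \<longlonglongrightarrow> l"
    using seq_compactE[OF compact_imp_seq_compact[OF e]] by blast
  have "l \<noteq> 0"
  proof
    assume "l = 0"
    then obtain n where "dist ((x \<circ> r) n) 0 < a"
      using metric_LIMSEQ_D[OF r(2) a] by blast
    then show False
      using x f_bounds(1)[of "r n"] by (simp add: nm_dist)
  qed
  then have "0 < nm l"
    by simp
  then obtain N where N: "\<forall>n\<ge>N. dist ((x \<circ> r) n) l < nm l"
    using metric_LIMSEQ_D[OF r(2)] by blast
  text \<open>\<open>nm\<close> is constant on the ball of radius \<open>nm l\<close> around \<open>l\<close>, so \<open>f \<circ> r\<close> is eventually constant.\<close>
  have "f (r n) = nm l" if "N \<le> n" for n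
  proof -
    have "nm (x (r n) - l) < nm l"
      using N that by (simp add: nm_dist)
    then have "nm (x (r n)) = nm l"
      by (rule nm_eq_if_nm_diff_less)
    with x show ?thesis
      by simp
  qed
  then have "f (r N) = f (r (Suc N))"
    by simp
  moreover have "r N \<noteq> r (Suc N)"
    using strict_monoD[OF r(1), of N "Suc N"] by simp
  ultimately show False
    using f(1) by (simp add: inj_def)
qed

lemma finite_nm_values_between:
  assumes a: "0 < a"
  shows "finite {v \<in> range nm. a \<le> v \<and> v \<le> b}"
proof -
  let ?S = "{v \<in> range nm. a \<le> v \<and> v \<le> b}"
  obtain e where e: "0 < e" "compact (cball (0::'k) e)"
    using local_field_abs by (auto simp: local_field_abs_def)
  then obtain c where c: "0 < nm c" "nm c < e / max b 1"
    using exists_nm_less[of "e / max b 1"] by auto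
  text \<open>Scaling by \<open>nm c\<close> moves \<open>?S\<close> into the compact ball.\<close>
  have "(\<lambda>v. nm c * v) ` ?S \<subseteq> {v \<in> range nm. nm c * a \<le> v \<and> v \<le> e}"
  proof
    fix w
    assume "w \<in> (\<lambda>v. nm c * v) ` ?S"
    then obtain x where w: "w = nm c * nm x" and x: "a \<le> nm x" "nm x \<le> b"
      by auto
    have "nm c * nm x \<le> e / max b 1 * max b 1"
      using c x e(1) by (intro mult_mono) auto
    moreover have "nm c * a \<le> nm c * nm x"
      using c x by (simp add: mult_left_mono)
    ultimately show "w \<in> {v \<in> range nm. nm c * a \<le> v \<and> v \<le> e}"
      using c w by (simp add: nm_mult[symmetric])
  qed
  moreover have "finite {v \<in> range nm. nm c * a \<le> v \<and> v \<le> e}"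
    using finite_nm_values_compact_ball[OF e(2)] c a by simp
  ultimately have "finite ((\<lambda>v. nm c * v) ` ?S)"
    by (rule finite_subset)
  then show ?thesis
    using c by (auto dest: finite_imageD simp: inj_on_def)
qed

lemma countable_range_nm: "countable (range nm)"
proof -
  let ?V = "\<lambda>n::nat. {v \<in> range nm. 1 / real (Suc n) \<le> v \<and> v \<le> real (Suc n)}"
  have "range nm \<subseteq> {0} \<union> (\<Union>n. ?V n)"
  proof
    fix v
    assume v: "v \<in> range nm"
    show "v \<in> {0} \<union> (\<Union>n. ?V n)"
    proof (cases "v = 0")
      case False
      with v have "0 < v"
        by auto
      obtain n where n: "max v (1 / v) \<le> real n"
        using real_arch_simple by blast
      then have "1 / Suc n \<le> 1 / (1 / v)"
        using \<open>0 < v\<close> by (intro divide_left_mono) auto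
      then show ?thesis
        using v n by auto
    qed simp
  qed
  moreover have "finite (?V n)" for n
    by (rule finite_nm_values_between) simp
  then have "countable ({0} \<union> (\<Union>n. ?V n))"
    by (simp add: countable_finite)
  ultimately show ?thesis
    using countable_subset by blast
qed

lemma sets_borel_range_nm: "range nm \<in> sets borel"
proof -
  have "range nm = (\<Union>v\<in>range nm. {v})"
    by auto
  also have "\<dots> \<in> sets borel"
    using countable_range_nm by (intro sets.countable_UN') auto
  finally show ?thesis .
qed

lemma exists_nm_gap:
  assumes "0 < t" "t \<notin> range nm"
  shows "\<exists>v1\<in>range nm. \<exists>v2\<in>range nm. v1 < t \<and> t < v2 \<and> (\<forall>v\<in>range nm. v \<le> v1 \<or> v2 \<le> v)"
proof -
  obtain z1 where z1: "0 < nm z1" "nm z1 < t"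
    using exists_nm_less[OF \<open>0 < t\<close>] by blast
  obtain z2 where z2: "t < nm z2"
    using exists_nm_greater by blast
  define F1 where "F1 = {v \<in> range nm. nm z1 \<le> v \<and> v \<le> t}"
  define F2 where "F2 = {v \<in> range nm. t \<le> v \<and> v \<le> nm z2}"
  have F: "finite F1" "finite F2" "nm z1 \<in> F1" "nm z2 \<in> F2"
    using finite_nm_values_between z1 z2 \<open>0 < t\<close> by (auto simp: F1_def F2_def)
  define v1 where "v1 = Max F1"
  define v2 where "v2 = Min F2"
  have "v1 \<in> F1" "v2 \<in> F2"
    unfolding v1_def v2_def using F by (auto intro: Max_in Min_in)
  then have "v1 \<in> range nm" "v2 \<in> range nm" "v1 < t" "t < v2"
    using assms(2) by (auto simp: F1_def F2_def order_less_le)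
  moreover have "v \<le> v1 \<or> v2 \<le> v" if "v \<in> range nm" for v
  proof (cases "v \<le> t")
    case True
    then have "v \<le> v1 \<or> v < nm z1"
      using F that unfolding v1_def by (auto simp: F1_def)
    then show ?thesis
      using \<open>v1 \<in> F1\<close> by (auto simp: F1_def)
  next
    case False
    then have "v2 \<le> v \<or> nm z2 < v"
      using F that unfolding v2_def by (auto simp: F2_def)
    then show ?thesis
      using \<open>v2 \<in> F2\<close> by (auto simp: F2_def)
  qed
  ultimately show ?thesis
    by blast
qed

lemma exists_dense_sequence: "\<exists>d::nat \<Rightarrow> 'k. \<forall>x e. 0 < e \<longrightarrow> (\<exists>n. nm (x - d n) < e)"
proof -
  obtain D :: "'k set" where "countable D" and D: "\<And>U. open U \<Longrightarrow> U \<noteq> {} \<Longrightarrow> \<exists>y\<in>D. y \<in> U"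
    by (erule countable_dense_setE)
  have "\<exists>n. nm (x - from_nat_into D n) < e" if "0 < e" for x e
  proof -
    have "\<exists>y\<in>D. y \<in> ball x e"
      using D[of "ball x e"] that by auto
    then obtain y where "y \<in> D" "dist x y < e"
      by auto
    moreover obtain n where "from_nat_into D n = y"
      using from_nat_into_surj[OF \<open>countable D\<close> \<open>y \<in> D\<close>] by blast
    ultimately show ?thesis
      by (auto simp: nm_dist)
  qed
  then show ?thesis
    by blast
qed

lemma near_INF_iff_eq_INF:
  fixes h :: "nat \<Rightarrow> real"
  assumes h: "\<And>n. h n \<in> range nm" and pos: "0 < (INF n. h n)"
  obtains K where "\<And>k n. K \<le> k \<Longrightarrow> h n < (INF n. h n) + 1 / Suc k \<longleftrightarrow> h n = (INF n. h n)"
proof -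
  define m where "m = (INF n. h n)"
  have "0 \<le> h n" for n
    using h[of n] by auto
  then have m_le: "m \<le> h n" for n
    unfolding m_def by (intro cINF_lower bdd_belowI[of _ 0]) auto
  text \<open>Above \<open>m > 0\<close> the values of \<open>nm\<close> are discrete, so there is a gap \<open>e\<close> above \<open>m\<close>.\<close>
  define F where "F = {v \<in> range nm. m < v \<and> v \<le> m + 1}"
  have "finite F"
    using finite_nm_values_between[of m "m + 1"] pos
    by (rule_tac rev_finite_subset) (auto simp: F_def m_def)
  define e where "e = (if F = {} then 1 else Min F - m)"
  have "0 < e"
    using \<open>finite F\<close> by (auto simp: e_def F_def)
  have gap: "m + e \<le> v" if "v \<in> F" for v
    using \<open>finite F\<close> that by (auto simp: e_def)
  obtain K where K: "1 / Suc K < e"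
    using nat_approx_posE[OF \<open>0 < e\<close>] by blast
  have "h n < m + 1 / Suc k \<longleftrightarrow> h n = m" if "K \<le> k" for n k
  proof
    assume less: "h n < m + 1 / Suc k"
    have "1 / Suc k \<le> 1 / Suc K"
      using that by (intro divide_left_mono) auto
    then have "h n < m + e"
      using less K by linarith
    then have "h n \<notin> F"
      using gap by force
    moreover have "1 / Suc k \<le> 1"
      by simp
    ultimately show "h n = m"
      using less m_le[of n] h[of n] by (auto simp: F_def)
  qed simp
  then show ?thesis
    unfolding m_def by (rule that)
qed

lemma near_minimizers_bounded:
  fixes h :: "nat \<Rightarrow> real" and d :: "nat \<Rightarrow> 'k"
  assumes h: "\<And>n. h n \<in> range nm"
    and ultra: "\<And>i j. nm (d i - d j) \<le> max (h i) (h j)"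
  defines "N k \<equiv> LEAST n. h n < (INF n. h n) + 1 / Suc k"
  shows "nm (d (N k)) \<le> max (h 0 + 1) (nm (d 0))"
proof -
  have h_nonneg: "0 \<le> h n" for n
    using h[of n] by auto
  have "h (N k) < (INF n. h n) + 1 / Suc k"
    unfolding N_def using h_nonneg by (intro LEAST_less_INF_add) auto
  moreover have "(INF n. h n) \<le> h 0"
    using h_nonneg by (intro cINF_lower bdd_belowI[of _ 0]) auto
  moreover have "1 / Suc k \<le> (1::real)"
    by simp
  ultimately have "nm (d (N k) - d 0) \<le> h 0 + 1"
    using ultra[of "N k" 0] by linarith
  then show ?thesis
    using nm_diff_le_max[of "d (N k)" 0 "d 0"] by simp
qed

lemma convergent_near_minimizers:
  fixes h :: "nat \<Rightarrow> real" and d :: "nat \<Rightarrow> 'k"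
  assumes h: "\<And>n. h n \<in> range nm"
    and ultra: "\<And>i j. nm (d i - d j) \<le> max (h i) (h j)"
  defines "N k \<equiv> LEAST n. h n < (INF n. h n) + 1 / Suc k"
  shows "convergent (\<lambda>k. d (N k))"
proof -
  define m where "m = (INF n. h n)"
  have h_nonneg: "0 \<le> h n" for n
    using h[of n] by auto
  have near: "h (N k) < m + 1 / Suc k" for k
    unfolding N_def m_def using h_nonneg by (intro LEAST_less_INF_add) auto
  have "0 \<le> m"
    unfolding m_def using h_nonneg by (intro cINF_greatest) auto
  then consider "m = 0" | "0 < m"
    by linarith
  then show ?thesis
  proof cases
    case 1
    have "Cauchy (\<lambda>k. d (N k))"
      using ultra near 1 by (intro Cauchy_if_nm_diff_le_max[of _ "\<lambda>k. h (N k)"]) auto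
    then show ?thesis
      by (rule Cauchy_imp_convergent)
  next
    case 2
    then obtain K where "\<And>k n. K \<le> k \<Longrightarrow> h n < m + 1 / Suc k \<longleftrightarrow> h n = m"
      using near_INF_iff_eq_INF[of h, OF h] unfolding m_def by blast
    then have "(\<lambda>n. h n < m + 1 / Suc k) = (\<lambda>n. h n = m)" if "K \<le> k" for k
      using that by blast
    then have "N k = (LEAST n. h n = m)" if "K \<le> k" for k
      using that unfolding N_def m_def[symmetric] by simp
    then have "\<forall>\<^sub>F k in sequentially. d (N k) = d (LEAST n. h n = m)"
      by (intro eventually_sequentiallyI[of K]) simp
    then have "(\<lambda>k. d (N k)) \<longlonglongrightarrow> d (LEAST n. h n = m)"
      by (rule tendsto_eventually)
    then show ?thesis
      by (auto simp: convergent_def)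
  qed
qed

end

section \<open>Conditional essential supremum\<close>

locale prob_subalgebra = prob_space M for M :: "'a measure" +
  fixes G :: "'a measure"
  assumes subalg: "subalgebra M G"
begin

sublocale sf: sigma_finite_subalgebra M G
  by (rule sigma_finite_subalgebra.intro[OF subalg])
    (use finite_measure_restr_to_subalg[OF subalg finite_measure_axioms] in \<open>simp add: finite_measure_def\<close>)

lemma borel_measurable_G_imp_M: "f \<in> borel_measurable G \<Longrightarrow> f \<in> borel_measurable M"
  using measurable_from_subalg[OF subalg] by blast

lemma sets_G_imp_sets_M: "A \<in> sets G \<Longrightarrow> A \<in> sets M"
  using subalg by (auto simp: subalgebra_def)

lemma space_G: "space G = space M"
  using subalg by (auto simp: subalgebra_def)

definition cond_Lp_norm :: "('a \<Rightarrow> real) \<Rightarrow> nat \<Rightarrow> 'a \<Rightarrow> real" where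
  "cond_Lp_norm S p x = real_cond_exp M G (\<lambda>y. S y ^ p) x powr (1 / real p)"

abbreviation csup :: "('a \<Rightarrow> real) \<Rightarrow> 'a \<Rightarrow> real" where
  "csup \<equiv> cond_ess_sup M G"

lemma csup_eq_SUP: "csup S x = (SUP p\<in>{1..}. cond_Lp_norm S p x)"
  by (simp add: cond_ess_sup_def cond_Lp_norm_def)

lemma borel_measurable_cond_Lp_norm [measurable]: "cond_Lp_norm S p \<in> borel_measurable G"
  unfolding cond_Lp_norm_def[abs_def] by measurable

lemma borel_measurable_csup [measurable]: "csup S \<in> borel_measurable G"
proof -
  have eq: "csup S = (\<lambda>x. - (INF p\<in>{1..}. - cond_Lp_norm S p x))"
    by (auto simp: fun_eq_iff csup_eq_SUP Inf_real_def image_image)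
  show ?thesis
    unfolding eq by measurable
qed

definition nonneg_bdd :: "('a \<Rightarrow> real) \<Rightarrow> real \<Rightarrow> bool" where
  "nonneg_bdd S K \<longleftrightarrow> S \<in> borel_measurable M \<and> (AE x in M. 0 \<le> S x \<and> S x \<le> K)"

lemma nonneg_bddD:
  assumes "nonneg_bdd S K"
  shows "S \<in> borel_measurable M" "AE x in M. 0 \<le> S x \<and> S x \<le> K"
  using assms by (simp_all add: nonneg_bdd_def)

lemma nonneg_bdd_bound_nonneg:
  assumes "nonneg_bdd S K"
  shows "0 \<le> K"
proof -
  have "AE x in M. 0 \<le> K"
    using nonneg_bddD(2)[OF assms] by eventually_elim auto
  then show ?thesis
    by simp
qed

lemma integrable_power_nonneg_bdd:
  assumes "nonneg_bdd S K"
  shows "integrable M (\<lambda>x. S x ^ p)"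
proof (rule integrable_const_bound[where B = "K ^ p"])
  show "AE x in M. norm (S x ^ p) \<le> K ^ p"
    using nonneg_bddD(2)[OF assms] by eventually_elim (simp add: power_mono)
qed (use nonneg_bddD(1)[OF assms] in simp)

lemma real_cond_exp_power_bounds:
  assumes S: "nonneg_bdd S K"
  shows "AE x in M. \<forall>p. 0 \<le> real_cond_exp M G (\<lambda>y. S y ^ p) x
                         \<and> real_cond_exp M G (\<lambda>y. S y ^ p) x \<le> K ^ p"
  unfolding AE_all_countable
proof
  fix p
  note [measurable] = nonneg_bddD(1)[OF S]
  have nonneg: "AE x in M. 0 \<le> real_cond_exp M G (\<lambda>y. S y ^ p) x"
    using nonneg_bddD(2)[OF S] by (intro sf.real_cond_exp_pos) (auto elim: eventually_mono)
  have "AE x in M. real_cond_exp M G (\<lambda>y. S y ^ p) x \<le> real_cond_exp M G (\<lambda>_. K ^ p) x"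
    using nonneg_bddD(2)[OF S] integrable_power_nonneg_bdd[OF S]
    by (intro sf.real_cond_exp_mono) (auto elim: eventually_mono simp: power_mono)
  moreover have "AE x in M. real_cond_exp M G (\<lambda>_. K ^ p) x = K ^ p"
    by (rule sf.real_cond_exp_F_meas) auto
  ultimately show "AE x in M. 0 \<le> real_cond_exp M G (\<lambda>y. S y ^ p) x
                               \<and> real_cond_exp M G (\<lambda>y. S y ^ p) x \<le> K ^ p"
    using nonneg by eventually_elim auto
qed

lemma csup_bounds:
  assumes S: "nonneg_bdd S K"
  shows "AE x in M. (\<forall>p\<ge>1. cond_Lp_norm S p x \<le> csup S x) \<and> 0 \<le> csup S x \<and> csup S x \<le> K"
  using real_cond_exp_power_bounds[OF S]
proof eventually_elim
  case (elim x)
  have Lp_le: "cond_Lp_norm S p x \<le> K" if "1 \<le> p" for p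
  proof -
    have "cond_Lp_norm S p x \<le> (K ^ p) powr (1 / real p)"
      unfolding cond_Lp_norm_def using elim by (intro powr_mono2) auto
    also have "\<dots> = K"
      using power_powr_inverse[OF nonneg_bdd_bound_nonneg[OF S] that] .
    finally show ?thesis .
  qed
  then have "bdd_above ((\<lambda>p. cond_Lp_norm S p x) ` {1..})"
    by (auto intro!: bdd_aboveI2)
  then have Lp_le_csup: "cond_Lp_norm S p x \<le> csup S x" if "1 \<le> p" for p
    unfolding csup_eq_SUP using that by (intro cSUP_upper) auto
  moreover have "0 \<le> csup S x"
    using Lp_le_csup[of 1] by (simp add: cond_Lp_norm_def order_trans[OF powr_ge_zero])
  moreover have "csup S x \<le> K"
    unfolding csup_eq_SUP using Lp_le by (intro cSUP_least) auto
  ultimately show ?case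
    by blast
qed

lemma csup_mono:
  assumes S: "nonneg_bdd S K" and T: "nonneg_bdd T L" and le: "AE x in M. S x \<le> T x"
  shows "AE x in M. csup S x \<le> csup T x"
proof -
  note [measurable] = nonneg_bddD(1)[OF S] nonneg_bddD(1)[OF T]
  have "AE x in M. \<forall>p. real_cond_exp M G (\<lambda>y. S y ^ p) x \<le> real_cond_exp M G (\<lambda>y. T y ^ p) x"
    unfolding AE_all_countable
  proof
    fix p
    have "AE x in M. S x ^ p \<le> T x ^ p"
      using le nonneg_bddD(2)[OF S] by eventually_elim (auto intro: power_mono)
    then show "AE x in M. real_cond_exp M G (\<lambda>y. S y ^ p) x \<le> real_cond_exp M G (\<lambda>y. T y ^ p) x"
      using integrable_power_nonneg_bdd[OF S] integrable_power_nonneg_bdd[OF T]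
      by (intro sf.real_cond_exp_mono) auto
  qed
  then show ?thesis
    using real_cond_exp_power_bounds[OF S] csup_bounds[OF T]
  proof eventually_elim
    case (elim x)
    have "cond_Lp_norm S p x \<le> csup T x" if "1 \<le> p" for p
    proof -
      have "cond_Lp_norm S p x \<le> cond_Lp_norm T p x"
        unfolding cond_Lp_norm_def using elim by (intro powr_mono2) auto
      also have "\<dots> \<le> csup T x"
        using elim that by auto
      finally show ?thesis .
    qed
    then show ?case
      unfolding csup_eq_SUP[of S] by (intro cSUP_least) auto
  qed
qed

lemma csup_measurable_eq:
  assumes g_meas [measurable]: "g \<in> borel_measurable G"
    and bounds: "AE x in M. 0 \<le> g x \<and> g x \<le> K"
  shows "AE x in M. csup g x = g x"
proof -
  have g: "nonneg_bdd g K"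
    using bounds borel_measurable_G_imp_M[OF g_meas] by (simp add: nonneg_bdd_def)
  have "AE x in M. \<forall>p. real_cond_exp M G (\<lambda>y. g y ^ p) x = g x ^ p"
    unfolding AE_all_countable
    using integrable_power_nonneg_bdd[OF g] by (intro allI sf.real_cond_exp_F_meas) auto
  then show ?thesis
    using bounds
  proof eventually_elim
    case (elim x)
    have "csup g x = (SUP p\<in>{1::nat..}. g x)"
      unfolding csup_eq_SUP
      by (rule SUP_cong) (use elim power_powr_inverse in \<open>auto simp: cond_Lp_norm_def\<close>)
    then show ?case
      by simp
  qed
qed

lemma csup_const: "0 \<le> c \<Longrightarrow> AE x in M. csup (\<lambda>_. c) x = c"
  by (rule csup_measurable_eq[where K = c]) auto

lemma cond_Lp_norm_le_double:
  assumes S: "nonneg_bdd S K"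
  shows "AE x in M. \<forall>p\<ge>1. cond_Lp_norm S p x \<le> cond_Lp_norm S (2 * p) x"
proof -
  note [measurable] = nonneg_bddD(1)[OF S]
  let ?E = "\<lambda>q x. real_cond_exp M G (\<lambda>y. S y ^ q) x"
  have "AE x in M. 1 \<le> p \<longrightarrow> cond_Lp_norm S p x \<le> cond_Lp_norm S (2 * p) x" for p
  proof -
    have square: "(\<lambda>y. (S y ^ p)\<^sup>2) = (\<lambda>y. S y ^ (2 * p))"
      by (simp add: fun_eq_iff power_mult[symmetric] mult.commute)
    have "AE x in M. (?E p x)\<^sup>2 \<le> real_cond_exp M G (\<lambda>y. (S y ^ p)\<^sup>2) x"
      by (rule sf.real_cond_exp_jensens_inequality(2)[where I = UNIV])
        (use integrable_power_nonneg_bdd[OF S] convex_power2 in \<open>auto simp: square\<close>)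
    then show ?thesis
      using real_cond_exp_power_bounds[OF S]
    proof eventually_elim
      case (elim x)
      show ?case
      proof
        assume "1 \<le> p"
        then have "cond_Lp_norm S p x = ((?E p x)\<^sup>2) powr (1 / real (2 * p))"
          unfolding cond_Lp_norm_def using elim power2_powr_double[of "?E p x" p] by simp
        also have "\<dots> \<le> cond_Lp_norm S (2 * p) x"
          unfolding cond_Lp_norm_def using elim by (intro powr_mono2) (auto simp: square)
        finally show "cond_Lp_norm S p x \<le> cond_Lp_norm S (2 * p) x" .
      qed
    qed
  qed
  then show ?thesis
    unfolding AE_all_countable by blast
qed

lemma cond_Lp_norm_le_pow2_mult:
  assumes S: "nonneg_bdd S K"
  shows "AE x in M. \<forall>p\<ge>1. \<forall>j. cond_Lp_norm S p x \<le> cond_Lp_norm S (2 ^ j * p) x"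
  using cond_Lp_norm_le_double[OF S]
proof eventually_elim
  case (elim x)
  show ?case
  proof (intro allI impI)
    fix p j :: nat
    assume "1 \<le> p"
    then show "cond_Lp_norm S p x \<le> cond_Lp_norm S (2 ^ j * p) x"
    proof (induction j)
      case (Suc j)
      then have "cond_Lp_norm S (2 ^ j * p) x \<le> cond_Lp_norm S (2 * (2 ^ j * p)) x"
        using elim by simp
      with Suc show ?case
        by (simp add: mult.assoc)
    qed simp
  qed
qed

lemma nonneg_bdd_max:
  assumes "nonneg_bdd S K" "nonneg_bdd T L"
  shows "nonneg_bdd (\<lambda>x. max (S x) (T x)) (max K L)"
proof -
  have "AE x in M. 0 \<le> max (S x) (T x) \<and> max (S x) (T x) \<le> max K L"
    using nonneg_bddD(2)[OF assms(1)] nonneg_bddD(2)[OF assms(2)] by eventually_elim auto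
  then show ?thesis
    using nonneg_bddD(1)[OF assms(1)] nonneg_bddD(1)[OF assms(2)] by (simp add: nonneg_bdd_def)
qed

lemma max_powr_distrib:
  fixes a b r :: real
  assumes "0 \<le> a" "0 \<le> b" "0 \<le> r"
  shows "max a b powr r = max (a powr r) (b powr r)"
proof (cases "a \<le> b")
  case True
  then have "a powr r \<le> b powr r"
    using assms by (intro powr_mono2) auto
  with True show ?thesis
    by (simp add: max.absorb2)
next
  case False
  then have "b powr r \<le> a powr r"
    using assms by (intro powr_mono2) auto
  with False show ?thesis
    by (simp add: max.absorb1)
qed

lemma cond_Lp_norm_max_le:
  assumes S: "nonneg_bdd S K" and T: "nonneg_bdd T L"
  shows "AE x in M. \<forall>q\<ge>1. cond_Lp_norm (\<lambda>y. max (S y) (T y)) q x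
           \<le> 2 powr (1 / real q) * max (cond_Lp_norm S q x) (cond_Lp_norm T q x)"
proof -
  note [measurable] = nonneg_bddD(1)[OF S] nonneg_bddD(1)[OF T]
  let ?E = "\<lambda>S q x. real_cond_exp M G (\<lambda>y. S y ^ q) x"
  let ?W = "\<lambda>y. max (S y) (T y)"
  have W: "nonneg_bdd ?W (max K L)"
    using S T by (rule nonneg_bdd_max)
  have "AE x in M. \<forall>q. ?E ?W q x \<le> ?E S q x + ?E T q x"
    unfolding AE_all_countable
  proof
    fix q
    have "AE x in M. ?W x ^ q \<le> S x ^ q + T x ^ q"
      using nonneg_bddD(2)[OF S] nonneg_bddD(2)[OF T] by eventually_elim (auto simp: max_def)
    then have "AE x in M. ?E ?W q x \<le> real_cond_exp M G (\<lambda>y. S y ^ q + T y ^ q) x"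
      using integrable_power_nonneg_bdd[OF S] integrable_power_nonneg_bdd[OF T]
        integrable_power_nonneg_bdd[OF W]
      by (intro sf.real_cond_exp_mono) auto
    moreover have "AE x in M. real_cond_exp M G (\<lambda>y. S y ^ q + T y ^ q) x = ?E S q x + ?E T q x"
      using integrable_power_nonneg_bdd[OF S] integrable_power_nonneg_bdd[OF T]
      by (intro sf.real_cond_exp_add) auto
    ultimately show "AE x in M. ?E ?W q x \<le> ?E S q x + ?E T q x"
      by eventually_elim simp
  qed
  then show ?thesis
    using real_cond_exp_power_bounds[OF S] real_cond_exp_power_bounds[OF T]
      real_cond_exp_power_bounds[OF W]
  proof eventually_elim
    case (elim x)
    show ?case
    proof (intro allI impI)
      fix q :: nat
      assume "1 \<le> q"
      have "cond_Lp_norm ?W q x \<le> (?E S q x + ?E T q x) powr (1 / real q)"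
        unfolding cond_Lp_norm_def using elim by (intro powr_mono2) auto
      also have "\<dots> \<le> (2 * max (?E S q x) (?E T q x)) powr (1 / real q)"
        using elim by (intro powr_mono2) auto
      also have "\<dots> = 2 powr (1 / real q) * max (?E S q x) (?E T q x) powr (1 / real q)"
        using elim by (simp add: powr_mult)
      also have "\<dots> = 2 powr (1 / real q) * max (cond_Lp_norm S q x) (cond_Lp_norm T q x)"
        using elim by (simp add: cond_Lp_norm_def max_powr_distrib)
      finally show "cond_Lp_norm ?W q x
                      \<le> 2 powr (1 / real q) * max (cond_Lp_norm S q x) (cond_Lp_norm T q x)" .
    qed
  qed
qed

lemma csup_max_le:
  assumes S: "nonneg_bdd S K" and T: "nonneg_bdd T L"
  shows "AE x in M. csup (\<lambda>y. max (S y) (T y)) x \<le> max (csup S x) (csup T x)"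
proof -
  let ?W = "\<lambda>y. max (S y) (T y)"
  have W: "nonneg_bdd ?W (max K L)"
    using S T by (rule nonneg_bdd_max)
  show ?thesis
    using cond_Lp_norm_max_le[OF S T] cond_Lp_norm_le_pow2_mult[OF W] csup_bounds[OF S] csup_bounds[OF T]
  proof eventually_elim
    case (elim x)
    define m where "m = max (csup S x) (csup T x)"
    text \<open>Along \<open>q = 2\<^sup>j p\<close> the conditional \<open>L\<^sup>q\<close> norms of \<open>?W\<close> increase, while the factor
      \<open>2 powr (1 / q)\<close> tends to \<open>1\<close>.\<close>
    have "cond_Lp_norm ?W p x \<le> m" if "1 \<le> p" for p
    proof (rule LIMSEQ_le_const[OF tendsto_two_powr_root_mult[OF that]], intro exI allI impI)
      fix j :: nat
      have "1 \<le> 2 ^ j * p"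
        using that by simp
      have "cond_Lp_norm ?W p x \<le> cond_Lp_norm ?W (2 ^ j * p) x"
        using elim(2) that by blast
      also have "\<dots> \<le> 2 powr (1 / real (2 ^ j * p))
                       * max (cond_Lp_norm S (2 ^ j * p) x) (cond_Lp_norm T (2 ^ j * p) x)"
        using elim(1) \<open>1 \<le> 2 ^ j * p\<close> by blast
      also have "\<dots> \<le> 2 powr (1 / real (2 ^ j * p)) * m"
        using elim(3,4) \<open>1 \<le> 2 ^ j * p\<close> unfolding m_def by (intro mult_left_mono max.mono) auto
      finally show "cond_Lp_norm ?W p x \<le> 2 powr (1 / real (2 ^ j * p)) * m" .
    qed
    then show ?case
      unfolding csup_eq_SUP[of ?W] m_def[symmetric] by (intro cSUP_least) auto
  qed
qed

lemma csup_le_max: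
  assumes R: "nonneg_bdd R K" and S: "nonneg_bdd S K1" and T: "nonneg_bdd T K2"
    and le: "AE x in M. R x \<le> max (S x) (T x)"
  shows "AE x in M. csup R x \<le> max (csup S x) (csup T x)"
proof -
  from csup_mono[OF R nonneg_bdd_max[OF S T] le] csup_max_le[OF S T] show ?thesis
    by eventually_elim simp
qed

lemma nonneg_bdd_indicator_mult:
  assumes S: "nonneg_bdd S K" and [measurable]: "A \<in> sets M"
  shows "nonneg_bdd (\<lambda>x. indicator A x * S x) K"
proof -
  have "AE x in M. 0 \<le> indicator A x * S x \<and> indicator A x * S x \<le> K"
    using nonneg_bddD(2)[OF S]
    by eventually_elim (use nonneg_bdd_bound_nonneg[OF S] in \<open>auto simp: indicator_def\<close>)
  then show ?thesis
    using nonneg_bddD(1)[OF S] by (simp add: nonneg_bdd_def)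
qed

lemma csup_indicator_mult:
  assumes S: "nonneg_bdd S K" and A: "A \<in> sets G"
  shows "AE x in M. csup (\<lambda>y. indicator A y * S y) x = indicator A x * csup S x"
proof -
  note [measurable] = nonneg_bddD(1)[OF S]
  have A_M: "A \<in> sets M"
    using sets_G_imp_sets_M[OF A] .
  have [measurable]: "indicator A \<in> borel_measurable G"
    using A by simp
  have "AE x in M. \<forall>p. real_cond_exp M G (\<lambda>y. indicator A y * S y ^ p) x
                      = indicator A x * real_cond_exp M G (\<lambda>y. S y ^ p) x"
    unfolding AE_all_countable
  proof
    fix p
    have "integrable M (\<lambda>y. S y ^ p * indicator A y)"
      using A_M integrable_power_nonneg_bdd[OF S] by (rule integrable_real_mult_indicator)
    then show "AE x in M. real_cond_exp M G (\<lambda>y. indicator A y * S y ^ p) x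
                 = indicator A x * real_cond_exp M G (\<lambda>y. S y ^ p) x"
      using integrable_power_nonneg_bdd[OF S] by (intro sf.real_cond_exp_mult) (auto simp: mult.commute)
  qed
  then show ?thesis
  proof eventually_elim
    case (elim x)
    have "cond_Lp_norm (\<lambda>y. indicator A y * S y) p x = indicator A x * cond_Lp_norm S p x"
      if "1 \<le> p" for p
    proof -
      have "(\<lambda>y. (indicator A y * S y) ^ p) = (\<lambda>y. indicator A y * S y ^ p)"
        using that by (auto simp: fun_eq_iff indicator_def)
      then show ?thesis
        using elim that by (auto simp: cond_Lp_norm_def indicator_def)
    qed
    then have "csup (\<lambda>y. indicator A y * S y) x = (SUP p\<in>{1..}. indicator A x * cond_Lp_norm S p x)"
      unfolding csup_eq_SUP by (intro SUP_cong) auto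
    then show ?case
      by (cases "x \<in> A") (simp_all add: csup_eq_SUP)
  qed
qed

lemma csup_local_eq:
  assumes S: "nonneg_bdd S K" and T: "nonneg_bdd T L" and A: "A \<in> sets G"
    and eq: "AE x in M. x \<in> A \<longrightarrow> S x = T x"
  shows "AE x in M. x \<in> A \<longrightarrow> csup S x = csup T x"
proof -
  have A_M: "A \<in> sets M"
    using sets_G_imp_sets_M[OF A] .
  have "AE x in M. indicator A x * S x = indicator A x * T x"
    using eq by eventually_elim (auto simp: indicator_def)
  then have "AE x in M. indicator A x * S x \<le> indicator A x * T x"
    and "AE x in M. indicator A x * T x \<le> indicator A x * S x"
    by (auto elim: eventually_mono)
  then have "AE x in M. csup (\<lambda>y. indicator A y * S y) x \<le> csup (\<lambda>y. indicator A y * T y) x"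
    and "AE x in M. csup (\<lambda>y. indicator A y * T y) x \<le> csup (\<lambda>y. indicator A y * S y) x"
    using nonneg_bdd_indicator_mult[OF S A_M] nonneg_bdd_indicator_mult[OF T A_M]
    by (blast intro: csup_mono)+
  with csup_indicator_mult[OF S A] csup_indicator_mult[OF T A] show ?thesis
    by eventually_elim (auto simp: indicator_def)
qed

lemma csup_ge_if_cond_prob_pos:
  assumes S: "nonneg_bdd S K" and [measurable]: "B \<in> sets M" and "0 \<le> t"
    and ge: "AE x in M. x \<in> B \<longrightarrow> t \<le> S x"
  shows "AE x in M. 0 < real_cond_exp M G (indicator B) x \<longrightarrow> t \<le> csup S x"
proof -
  note [measurable] = nonneg_bddD(1)[OF S]
  let ?P = "real_cond_exp M G (indicator B)"
  have int_B: "integrable M (indicator B :: 'a \<Rightarrow> real)"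
    by (rule integrable_const_bound[where B = 1]) (auto simp: indicator_def)
  have "AE x in M. \<forall>p. t ^ p * ?P x \<le> real_cond_exp M G (\<lambda>y. S y ^ p) x"
    unfolding AE_all_countable
  proof
    fix p
    have "AE x in M. t ^ p * indicator B x \<le> S x ^ p"
      using nonneg_bddD(2)[OF S] ge
      by eventually_elim (use \<open>0 \<le> t\<close> in \<open>auto simp: indicator_def intro: power_mono\<close>)
    then have "AE x in M. real_cond_exp M G (\<lambda>y. t ^ p * indicator B y) x
                            \<le> real_cond_exp M G (\<lambda>y. S y ^ p) x"
      using int_B integrable_power_nonneg_bdd[OF S] by (intro sf.real_cond_exp_mono) auto
    with sf.real_cond_exp_cmult[OF int_B, of "t ^ p"]
    show "AE x in M. t ^ p * ?P x \<le> real_cond_exp M G (\<lambda>y. S y ^ p) x"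
      by eventually_elim simp
  qed
  then show ?thesis
    using csup_bounds[OF S]
  proof eventually_elim
    case (elim x)
    show ?case
    proof
      assume "0 < ?P x"
      show "t \<le> csup S x"
      proof (rule le_if_mult_powr_root_le[OF \<open>0 < ?P x\<close>])
        fix p :: nat
        assume "1 \<le> p"
        have "t * ?P x powr (1 / real p) = (t ^ p * ?P x) powr (1 / real p)"
          using power_powr_inverse[OF \<open>0 \<le> t\<close> \<open>1 \<le> p\<close>] \<open>0 < ?P x\<close> \<open>0 \<le> t\<close>
          by (simp add: powr_mult)
        also have "\<dots> \<le> cond_Lp_norm S p x"
          unfolding cond_Lp_norm_def using elim \<open>0 < ?P x\<close> \<open>0 \<le> t\<close> by (intro powr_mono2) auto
        also have "\<dots> \<le> csup S x"
          using elim \<open>1 \<le> p\<close> by blast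
        finally show "t * ?P x powr (1 / real p) \<le> csup S x" .
      qed
    qed
  qed
qed

lemma csup_less_imp_AE_less:
  assumes S: "nonneg_bdd S K" and A: "A \<in> sets G" and "0 \<le> t"
    and less: "AE x in M. x \<in> A \<longrightarrow> csup S x < t"
  shows "AE x in M. x \<in> A \<longrightarrow> S x < t"
proof -
  note [measurable] = nonneg_bddD(1)[OF S] sets_G_imp_sets_M[OF A]
  define B where "B = {x \<in> space M. t \<le> S x}"
  have [measurable]: "B \<in> sets M"
    unfolding B_def by measurable
  let ?P = "real_cond_exp M G (indicator B)"
  have "AE x in M. 0 < ?P x \<longrightarrow> t \<le> csup S x"
    by (rule csup_ge_if_cond_prob_pos[OF S]) (use \<open>0 \<le> t\<close> in \<open>auto simp: B_def\<close>)
  moreover have "AE x in M. 0 \<le> ?P x"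
    by (rule sf.real_cond_exp_pos) auto
  ultimately have "AE x in M. indicator A x * ?P x = (0::real)"
    using less by eventually_elim (auto simp: indicator_def)
  text \<open>Integrating over \<open>A\<close> turns \<open>P(B | G) = 0\<close> on \<open>A\<close> into \<open>P(A \<inter> B) = 0\<close>.\<close>
  then have "(\<integral>x. indicator A x * ?P x \<partial>M) = (\<integral>x. 0 \<partial>M)"
    by (intro integral_cong_AE) auto
  then have "(\<integral>x. indicator A x * ?P x \<partial>M) = 0"
    by simp
  moreover have "(\<integral>x\<in>A. indicator B x \<partial>M) = (\<integral>x\<in>A. ?P x \<partial>M)"
    by (rule sf.real_cond_exp_intA) (auto intro: integrable_const_bound[where B = 1] simp: A indicator_def)
  ultimately have "(\<integral>x. indicator A x * indicator B x \<partial>M) = (0::real)"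
    by (simp add: set_lebesgue_integral_def)
  moreover have "integrable M (\<lambda>x. indicator A x * indicator B x :: real)"
    by (rule integrable_const_bound[where B = 1]) (auto simp: indicator_def)
  ultimately have "AE x in M. indicator A x * indicator B x = (0::real)"
    using integral_nonneg_eq_0_iff_AE[of M "\<lambda>x. indicator A x * indicator B x :: real"] by simp
  then show ?thesis
    using AE_space by eventually_elim (auto simp: indicator_def B_def split: if_splits)
qed

lemma csup_le_if_AE_le:
  assumes S: "nonneg_bdd S K" and A: "A \<in> sets G" and "0 \<le> c"
    and le: "AE x in M. x \<in> A \<longrightarrow> S x \<le> c"
  shows "AE x in M. x \<in> A \<longrightarrow> csup S x \<le> c"
proof -
  note [measurable] = nonneg_bddD(1)[OF S]
  let ?T = "\<lambda>x. min (S x) c"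
  have "AE x in M. 0 \<le> ?T x \<and> ?T x \<le> K"
    using nonneg_bddD(2)[OF S] by eventually_elim (use \<open>0 \<le> c\<close> in auto)
  then have T: "nonneg_bdd ?T K"
    by (simp add: nonneg_bdd_def)
  have "AE x in M. x \<in> A \<longrightarrow> csup S x = csup ?T x"
    using le by (intro csup_local_eq[OF S T A]) (auto elim: eventually_mono)
  moreover have "AE x in M. csup ?T x \<le> csup (\<lambda>_. c) x"
    using \<open>0 \<le> c\<close> by (intro csup_mono[OF T, of _ c]) (auto simp: nonneg_bdd_def)
  ultimately show ?thesis
    using csup_const[OF \<open>0 \<le> c\<close>] by eventually_elim auto
qed

lemma csup_gap:
  assumes S: "nonneg_bdd S K" and "0 \<le> v1" "v1 < v2"
    and gap: "AE x in M. S x \<le> v1 \<or> v2 \<le> S x"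
  shows "AE x in M. \<not> (v1 < csup S x \<and> csup S x < v2)"
proof -
  define A where "A = {x \<in> space G. v1 < csup S x \<and> csup S x < v2}"
  have A: "A \<in> sets G"
    unfolding A_def by measurable
  have "AE x in M. x \<in> A \<longrightarrow> S x < v2"
    using \<open>0 \<le> v1\<close> \<open>v1 < v2\<close> by (intro csup_less_imp_AE_less[OF S A]) (auto simp: A_def)
  with gap have "AE x in M. x \<in> A \<longrightarrow> S x \<le> v1"
    by eventually_elim auto
  then have "AE x in M. x \<in> A \<longrightarrow> csup S x \<le> v1"
    by (rule csup_le_if_AE_le[OF S A \<open>0 \<le> v1\<close>])
  then show ?thesis
    using AE_space by eventually_elim (auto simp: A_def space_G)
qed

end

section \<open>Conditional distance in a local field\<close>

locale local_field_subalgebra = prob_subalgebra M G + local_field nm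
  for M :: "'a measure" and G :: "'a measure"
    and nm :: "'k::{field, metric_space, second_countable_topology} \<Rightarrow> real"
begin

lemma csup_in_range_nm:
  assumes S: "nonneg_bdd S K" and S_range: "\<And>x. S x \<in> range nm"
  shows "AE x in M. csup S x \<in> range nm"
proof -
  text \<open>\<open>csup S\<close> avoids each of the countably many gaps of \<open>range nm\<close>, and every positive real
    outside \<open>range nm\<close> lies in such a gap.\<close>
  define P where "P = {(v1, v2) \<in> range nm \<times> range nm. v1 < v2 \<and> (\<forall>v\<in>range nm. v \<le> v1 \<or> v2 \<le> v)}"
  have "countable P"
    unfolding P_def using countable_range_nm by (blast intro: countable_subset countable_SIGMA)
  moreover have "AE x in M. \<not> (v1 < csup S x \<and> csup S x < v2)" if "(v1, v2) \<in> P" for v1 v2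
  proof (rule csup_gap[OF S])
    show "0 \<le> v1" "v1 < v2"
      using that by (auto simp: P_def)
    have "S x \<le> v1 \<or> v2 \<le> S x" for x
      using that S_range[of x] unfolding P_def by blast
    then show "AE x in M. S x \<le> v1 \<or> v2 \<le> S x"
      by simp
  qed
  ultimately have "AE x in M. \<forall>(v1, v2)\<in>P. \<not> (v1 < csup S x \<and> csup S x < v2)"
    by (subst AE_ball_countable) auto
  then show ?thesis
    using csup_bounds[OF S]
  proof eventually_elim
    case (elim x)
    show ?case
    proof (rule ccontr)
      assume "csup S x \<notin> range nm"
      moreover have "0 \<in> range nm"
        by (metis nm_zero rangeI)
      ultimately have "0 < csup S x"
        using elim by (metis order_le_less)
      then obtain v1 v2 where "(v1, v2) \<in> P" "v1 < csup S x" "csup S x < v2"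
        using exists_nm_gap[OF _ \<open>csup S x \<notin> range nm\<close>] unfolding P_def by auto
      then show False
        using elim by blast
    qed
  qed
qed

lemma Linf_borel_measurable: "Z \<in> Linf M N nm \<Longrightarrow> Z \<in> borel_measurable N"
  by (simp add: Linf_def)

lemma AE_nm_le_norm_inf: "AE x in M. ereal (nm (Z x)) \<le> norm_inf M nm Z"
  unfolding norm_inf_def by (rule esssup_AE)

lemma Linf_norm_inf_real:
  assumes "Z \<in> Linf M N nm"
  obtains r where "0 \<le> r" "norm_inf M nm Z = ereal r"
proof -
  have "AE x in M. 0 \<le> norm_inf M nm Z"
    using AE_nm_le_norm_inf[of Z] by eventually_elim (rule order_trans[rotated], auto)
  then have "0 \<le> norm_inf M nm Z"
    by simp
  moreover have "norm_inf M nm Z < \<infinity>"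
    using assms by (simp add: Linf_def)
  ultimately show ?thesis
    using that by (cases "norm_inf M nm Z") auto
qed

lemma Linf_ae_bounded:
  assumes "Z \<in> Linf M N nm"
  obtains K where "AE x in M. nm (Z x) \<le> K"
proof -
  obtain r where "norm_inf M nm Z = ereal r"
    using Linf_norm_inf_real[OF assms] .
  then show ?thesis
    using that AE_nm_le_norm_inf[of Z] by (auto elim: eventually_mono)
qed

lemma norm_inf_le:
  assumes "f \<in> borel_measurable M" "AE x in M. nm (f x) \<le> K"
  shows "norm_inf M nm f \<le> ereal K"
  unfolding norm_inf_def using assms by (intro esssup_I) (auto elim: eventually_mono)

lemma norm_inf_diff_commute: "norm_inf M nm (\<lambda>x. X x - Y x) = norm_inf M nm (\<lambda>x. Y x - X x)"
  by (simp add: norm_inf_def nm_minus_commute)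

lemma Linf_subalgebraI:
  assumes "Z \<in> borel_measurable G" "AE x in M. nm (Z x) \<le> K"
  shows "Z \<in> Linf M G nm"
proof -
  have "norm_inf M nm Z \<le> ereal K"
    using assms by (intro norm_inf_le borel_measurable_G_imp_M)
  then have "norm_inf M nm Z < \<infinity>"
    by (rule le_less_trans) simp
  with assms(1) show ?thesis
    by (simp add: Linf_def)
qed

lemma Linf_subalgebra_imp_Linf: "Z \<in> Linf M G nm \<Longrightarrow> Z \<in> Linf M M nm"
  by (simp add: Linf_def borel_measurable_G_imp_M)

lemma Linf_const [simp]: "(\<lambda>_. c) \<in> Linf M G nm"
  by (rule Linf_subalgebraI[of _ "nm c"]) simp_all

lemma nonneg_bdd_nm_diff:
  assumes "X \<in> Linf M M nm" "Z \<in> Linf M M nm"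
  obtains K where "nonneg_bdd (\<lambda>x. nm (X x - Z x)) K"
proof -
  have [measurable]: "X \<in> borel_measurable M" "Z \<in> borel_measurable M"
    using assms by (simp_all add: Linf_def)
  obtain KX KZ where "AE x in M. nm (X x) \<le> KX" "AE x in M. nm (Z x) \<le> KZ"
    using Linf_ae_bounded[OF assms(1)] Linf_ae_bounded[OF assms(2)] by metis
  then have "AE x in M. nm (X x - Z x) \<le> max KX KZ"
  proof eventually_elim
    case (elim x)
    then show ?case
      using nm_diff_le_max[of "X x" "Z x" 0] by simp
  qed
  then have "nonneg_bdd (\<lambda>x. nm (X x - Z x)) (max KX KZ)"
    by (simp add: nonneg_bdd_def)
  then show ?thesis
    by (rule that)
qed

lemma Linf_diff:
  assumes "X \<in> Linf M M nm" "Y \<in> Linf M M nm"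
  shows "(\<lambda>x. X x - Y x) \<in> Linf M M nm"
proof -
  obtain K where K: "nonneg_bdd (\<lambda>x. nm (X x - Y x)) K"
    using nonneg_bdd_nm_diff[OF assms] .
  have [measurable]: "X \<in> borel_measurable M" "Y \<in> borel_measurable M"
    using assms by (simp_all add: Linf_def)
  have "norm_inf M nm (\<lambda>x. X x - Y x) \<le> ereal K"
    using nonneg_bddD(2)[OF K] by (intro norm_inf_le) (auto elim: eventually_mono)
  then have "norm_inf M nm (\<lambda>x. X x - Y x) < \<infinity>"
    by (rule le_less_trans) simp
  then show ?thesis
    by (simp add: Linf_def)
qed

abbreviation cdist :: "('a \<Rightarrow> 'k) \<Rightarrow> ('a \<Rightarrow> 'k) \<Rightarrow> 'a \<Rightarrow> real" where
  "cdist X Z \<equiv> csup (\<lambda>x. nm (X x - Z x))"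

lemma cond_exp_set_iff:
  "U \<in> cond_exp_set M G nm X \<longleftrightarrow>
     U \<in> Linf M G nm \<and> (\<forall>Z\<in>Linf M G nm. AE x in M. cdist X U x \<le> cdist X Z x)"
  by (simp add: cond_exp_set_def cond_norm_def)

lemma cdist_commute: "cdist X Z = cdist Z X"
  by (simp add: nm_minus_commute)

lemma cdist_nonneg:
  assumes "X \<in> Linf M M nm" "Z \<in> Linf M M nm"
  shows "AE x in M. 0 \<le> cdist X Z x"
proof -
  obtain K where "nonneg_bdd (\<lambda>x. nm (X x - Z x)) K"
    using nonneg_bdd_nm_diff[OF assms] .
  then show ?thesis
    using csup_bounds by (auto elim: eventually_mono)
qed

lemma cdist_le_const:
  assumes "X \<in> Linf M M nm" "Z \<in> Linf M M nm" and le: "AE x in M. nm (X x - Z x) \<le> c"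
  shows "AE x in M. cdist X Z x \<le> c"
proof -
  have [measurable]: "X \<in> borel_measurable M" "Z \<in> borel_measurable M"
    using assms by (simp_all add: Linf_def)
  have "nonneg_bdd (\<lambda>x. nm (X x - Z x)) c"
    using le by (simp add: nonneg_bdd_def)
  then show ?thesis
    using csup_bounds by (auto elim: eventually_mono)
qed

lemma cdist_eq_nm:
  assumes "X \<in> Linf M G nm" "Z \<in> Linf M G nm"
  shows "AE x in M. cdist X Z x = nm (X x - Z x)"
proof -
  have [measurable]: "X \<in> borel_measurable G" "Z \<in> borel_measurable G"
    using assms by (simp_all add: Linf_def)
  obtain K where "nonneg_bdd (\<lambda>x. nm (X x - Z x)) K"
    using nonneg_bdd_nm_diff[OF assms[THEN Linf_subalgebra_imp_Linf]] .
  then show ?thesis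
    by (intro csup_measurable_eq[of _ K]) (auto simp: nonneg_bdd_def)
qed

lemma cdist_triangle:
  assumes "X \<in> Linf M M nm" "Y \<in> Linf M M nm" "Z \<in> Linf M M nm"
  shows "AE x in M. cdist X Z x \<le> max (cdist X Y x) (cdist Y Z x)"
proof -
  obtain K1 K2 K3 where "nonneg_bdd (\<lambda>x. nm (X x - Z x)) K1"
    "nonneg_bdd (\<lambda>x. nm (X x - Y x)) K2" "nonneg_bdd (\<lambda>x. nm (Y x - Z x)) K3"
    using nonneg_bdd_nm_diff[OF assms(1,3)] nonneg_bdd_nm_diff[OF assms(1,2)]
      nonneg_bdd_nm_diff[OF assms(2,3)] by metis
  then show ?thesis
    by (rule csup_le_max) (simp add: nm_diff_le_max)
qed

lemma cdist_le_max_nm: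
  assumes X: "X \<in> Linf M M nm" and W: "W \<in> Linf M G nm" and Z: "Z \<in> Linf M G nm"
  shows "AE x in M. cdist X Z x \<le> max (cdist X W x) (nm (W x - Z x))"
  using cdist_triangle[OF X W[THEN Linf_subalgebra_imp_Linf] Z[THEN Linf_subalgebra_imp_Linf]]
    cdist_eq_nm[OF W Z]
  by eventually_elim simp

lemma cdist_local_eq:
  assumes "X \<in> Linf M M nm" "Z \<in> Linf M M nm" "Z' \<in> Linf M M nm" and "A \<in> sets G"
    and "AE x in M. x \<in> A \<longrightarrow> Z x = Z' x"
  shows "AE x in M. x \<in> A \<longrightarrow> cdist X Z x = cdist X Z' x"
proof -
  obtain K K' where "nonneg_bdd (\<lambda>x. nm (X x - Z x)) K" "nonneg_bdd (\<lambda>x. nm (X x - Z' x)) K'"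
    using nonneg_bdd_nm_diff[OF assms(1,2)] nonneg_bdd_nm_diff[OF assms(1,3)] by metis
  then show ?thesis
    by (rule csup_local_eq) (use assms in \<open>auto elim: eventually_mono\<close>)
qed

lemma cdist_in_range_nm:
  assumes "X \<in> Linf M M nm" "Z \<in> Linf M M nm"
  shows "AE x in M. cdist X Z x \<in> range nm"
proof -
  obtain K where "nonneg_bdd (\<lambda>x. nm (X x - Z x)) K"
    using nonneg_bdd_nm_diff[OF assms] .
  then show ?thesis
    by (rule csup_in_range_nm) simp
qed

lemma cdist_select_const:
  fixes d :: "nat \<Rightarrow> 'k" and N :: "'a \<Rightarrow> nat"
  assumes X: "X \<in> Linf M M nm" and N [measurable]: "N \<in> G \<rightarrow>\<^sub>M count_space UNIV"
    and dN: "(\<lambda>x. d (N x)) \<in> Linf M G nm"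
  shows "AE x in M. cdist X (\<lambda>y. d (N y)) x = cdist X (\<lambda>_. d (N x)) x"
proof -
  have "AE x in M. \<forall>n. x \<in> {y \<in> space G. N y = n} \<longrightarrow> cdist X (\<lambda>y. d (N y)) x = cdist X (\<lambda>_. d n) x"
    unfolding AE_all_countable
  proof (intro allI cdist_local_eq[OF X])
    fix n
    show "(\<lambda>y. d (N y)) \<in> Linf M M nm" "(\<lambda>_. d n) \<in> Linf M M nm"
      using dN by (simp_all add: Linf_subalgebra_imp_Linf)
    show "{y \<in> space G. N y = n} \<in> sets G"
      by measurable
  qed auto
  then show ?thesis
    using AE_space by eventually_elim (auto simp: space_G)
qed

subsection \<open>Existence of best approximations\<close>

text \<open>A version of \<open>n \<mapsto> cdist X (\<lambda>_. d n)\<close> whose almost sure properties hold everywhere.\<close>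
lemma cdist_const_version:
  fixes d :: "nat \<Rightarrow> 'k"
  assumes X: "X \<in> Linf M M nm"
  obtains h where "\<And>n. h n \<in> borel_measurable G" "\<And>n x. h n x \<in> range nm"
    "\<And>i j x. nm (d i - d j) \<le> max (h i x) (h j x)"
    "AE x in M. \<forall>n. h n x = cdist X (\<lambda>_. d n) x"
proof -
  let ?c = "\<lambda>n. cdist X (\<lambda>_. d n)"
  have d: "(\<lambda>_. d n) \<in> Linf M M nm" for n
    by (simp add: Linf_subalgebra_imp_Linf)
  have "AE x in M. \<forall>n. ?c n x \<in> range nm"
    using cdist_in_range_nm[OF X d] by (simp add: AE_all_countable)
  moreover have "AE x in M. \<forall>i j. nm (d i - d j) \<le> max (?c i x) (?c j x)"
    unfolding AE_all_countable
  proof (intro allI)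
    fix i j
    have "AE x in M. cdist (\<lambda>_. d i) (\<lambda>_. d j) x \<le> max (cdist (\<lambda>_. d i) X x) (?c j x)"
      using d[of i] X d[of j] by (rule cdist_triangle)
    moreover have "AE x in M. cdist (\<lambda>_. d i) (\<lambda>_. d j) x = nm (d i - d j)"
      by (rule cdist_eq_nm) simp_all
    ultimately show "AE x in M. nm (d i - d j) \<le> max (?c i x) (?c j x)"
      by eventually_elim (simp add: cdist_commute[of "\<lambda>_. d i" X])
  qed
  ultimately have "AE x in M. x \<in> {x \<in> space G. (\<forall>n. ?c n x \<in> range nm) \<and>
                      (\<forall>i j. nm (d i - d j) \<le> max (?c i x) (?c j x))}" (is "AE x in M. x \<in> ?good")
    using AE_space by eventually_elim (simp add: space_G)
  moreover have "?good \<in> sets G"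
    using sets_borel_range_nm by measurable
  moreover define h where "h n x = (if x \<in> ?good then ?c n x else nm (d n))" for n x
  ultimately show ?thesis
  proof (intro that)
    show "h n \<in> borel_measurable G" for n
      unfolding h_def using \<open>?good \<in> sets G\<close> by measurable
    show "nm (d i - d j) \<le> max (h i x) (h j x)" for i j x
      using nm_diff_le_max[of "d i" "d j" 0] by (simp add: h_def)
  qed (auto simp: h_def elim: eventually_mono)
qed

lemma limit_of_near_minimizers:
  fixes h :: "nat \<Rightarrow> 'a \<Rightarrow> real" and d :: "nat \<Rightarrow> 'k"
  assumes h_meas [measurable]: "\<And>n. h n \<in> borel_measurable G"
    and h_range: "\<And>n x. h n x \<in> range nm"
    and ultra: "\<And>i j x. nm (d i - d j) \<le> max (h i x) (h j x)"
    and h0: "AE x in M. h 0 x \<le> K"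
  defines "N k x \<equiv> LEAST n. h n x < (INF n. h n x) + 1 / Suc k"
  obtains Z where "Z \<in> Linf M G nm" "\<And>k. (\<lambda>x. N k x) \<in> G \<rightarrow>\<^sub>M count_space UNIV"
    "\<And>k. (\<lambda>x. d (N k x)) \<in> Linf M G nm" "\<And>x. (\<lambda>k. d (N k x)) \<longlonglongrightarrow> Z x"
proof -
  have N_meas [measurable]: "(\<lambda>x. N k x) \<in> G \<rightarrow>\<^sub>M count_space UNIV" for k
    unfolding N_def by measurable
  have Zk_meas [measurable]: "(\<lambda>x. d (N k x)) \<in> borel_measurable G" for k
    by (rule measurable_compose[OF N_meas]) simp
  have Zk_bound: "nm (d (N k x)) \<le> max (h 0 x + 1) (nm (d 0))" for k x
    using near_minimizers_bounded[of "\<lambda>n. h n x" d] h_range ultra by (simp add: N_def)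
  define Z where "Z x = lim (\<lambda>k. d (N k x))" for x
  have Zk_lim: "(\<lambda>k. d (N k x)) \<longlonglongrightarrow> Z x" for x
    using convergent_near_minimizers[of "\<lambda>n. h n x" d] h_range ultra
    by (simp add: Z_def N_def convergent_LIMSEQ_iff)
  have Z_bound: "nm (Z x) \<le> max (h 0 x + 1) (nm (d 0))" for x
  proof -
    have "(\<lambda>k. dist (d (N k x)) 0) \<longlonglongrightarrow> dist (Z x) 0"
      by (intro tendsto_intros Zk_lim)
    then have "dist (Z x) 0 \<le> max (h 0 x + 1) (nm (d 0))"
      by (rule LIMSEQ_le_const2) (use Zk_bound in \<open>simp add: nm_dist\<close>)
    then show ?thesis
      by (simp add: nm_dist)
  qed
  have bound: "AE x in M. max (h 0 x + 1) (nm (d 0)) \<le> max (K + 1) (nm (d 0))"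
    using h0 by eventually_elim auto
  show ?thesis
  proof (rule that)
    have "AE x in M. nm (Z x) \<le> max (K + 1) (nm (d 0))"
      using bound by eventually_elim (rule order_trans[OF Z_bound])
    then show "Z \<in> Linf M G nm"
      using borel_measurable_LIMSEQ_metric[OF Zk_meas Zk_lim] by (intro Linf_subalgebraI)
    fix k
    have "AE x in M. nm (d (N k x)) \<le> max (K + 1) (nm (d 0))"
      using bound by eventually_elim (rule order_trans[OF Zk_bound])
    then show "(\<lambda>x. d (N k x)) \<in> Linf M G nm"
      by (intro Linf_subalgebraI) simp
  qed (use N_meas Zk_lim in auto)
qed

lemma exists_cdist_le_INF:
  fixes d :: "nat \<Rightarrow> 'k"
  assumes X: "X \<in> Linf M M nm"
  shows "\<exists>Z\<in>Linf M G nm. AE x in M. cdist X Z x \<le> (INF n. cdist X (\<lambda>_. d n) x)"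
proof -
  obtain h where h_meas: "\<And>n. h n \<in> borel_measurable G" and h_range: "\<And>n x. h n x \<in> range nm"
    and ultra: "\<And>i j x. nm (d i - d j) \<le> max (h i x) (h j x)"
    and h_eq: "AE x in M. \<forall>n. h n x = cdist X (\<lambda>_. d n) x"
    using cdist_const_version[OF X] by blast
  have d: "(\<lambda>_. d n) \<in> Linf M M nm" for n
    by (simp add: Linf_subalgebra_imp_Linf)
  obtain K where "nonneg_bdd (\<lambda>x. nm (X x - d 0)) K"
    using nonneg_bdd_nm_diff[OF X d] .
  then have "AE x in M. cdist X (\<lambda>_. d 0) x \<le> K"
    using csup_bounds by (auto elim: eventually_mono)
  with h_eq have "AE x in M. h 0 x \<le> K"
    by eventually_elim simp
  define N where "N k x = (LEAST n. h n x < (INF n. h n x) + 1 / Suc k)" for k x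
  obtain Z where Z: "Z \<in> Linf M G nm" and N_meas: "\<And>k. (\<lambda>x. N k x) \<in> G \<rightarrow>\<^sub>M count_space UNIV"
    and Zk: "\<And>k. (\<lambda>x. d (N k x)) \<in> Linf M G nm" and Zk_lim: "\<And>x. (\<lambda>k. d (N k x)) \<longlonglongrightarrow> Z x"
    using limit_of_near_minimizers[where h = h and d = d and K = K,
        OF h_meas h_range ultra \<open>AE x in M. h 0 x \<le> K\<close>]
    unfolding N_def by blast
  have h_nonneg: "0 \<le> h n x" for n x
    using h_range[of n x] by auto
  have near: "h (N k x) x < (INF n. h n x) + 1 / Suc k" for k x
    unfolding N_def using h_nonneg by (intro LEAST_less_INF_add) auto
  have "AE x in M. \<forall>k. cdist X (\<lambda>y. d (N k y)) x = cdist X (\<lambda>_. d (N k x)) x"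
    unfolding AE_all_countable using N_meas Zk by (intro allI cdist_select_const[OF X])
  with h_eq have "AE x in M. \<forall>k. cdist X (\<lambda>y. d (N k y)) x = h (N k x) x"
    by eventually_elim simp
  moreover have "AE x in M. \<forall>k. cdist X Z x \<le> max (cdist X (\<lambda>y. d (N k y)) x) (nm (d (N k x) - Z x))"
    unfolding AE_all_countable using Zk by (intro allI cdist_le_max_nm[OF X _ Z])
  ultimately have "AE x in M. cdist X Z x \<le> (INF n. h n x)"
  proof eventually_elim
    case (elim x)
    show ?case
    proof (rule le_if_le_max_tendsto[OF _ Zk_lim])
      show "0 \<le> (INF n. h n x)"
        using h_nonneg by (intro cINF_greatest) auto
      fix k
      have "cdist X Z x \<le> max (h (N k x) x) (nm (d (N k x) - Z x))"
        using elim by simp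
      also have "\<dots> \<le> max ((INF n. h n x) + 1 / Suc k) (dist (d (N k x)) (Z x))"
        using near[of k x] by (simp add: nm_dist)
      finally show "cdist X Z x \<le> max ((INF n. h n x) + 1 / Suc k) (dist (d (N k x)) (Z x))" .
    qed
  qed
  with h_eq have "AE x in M. cdist X Z x \<le> (INF n. cdist X (\<lambda>_. d n) x)"
    by eventually_elim simp
  with Z show ?thesis
    by blast
qed

lemma INF_cdist_le:
  fixes d :: "nat \<Rightarrow> 'k"
  assumes X: "X \<in> Linf M M nm" and Z: "Z \<in> Linf M G nm"
    and dense: "\<And>x e. 0 < e \<Longrightarrow> \<exists>n. nm (x - d n) < e"
  shows "AE x in M. (INF n. cdist X (\<lambda>_. d n) x) \<le> cdist X Z x"
proof -
  have d: "(\<lambda>_. d n) \<in> Linf M M nm" for n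
    by (simp add: Linf_subalgebra_imp_Linf)
  have Z_M: "Z \<in> Linf M M nm"
    using Z by (rule Linf_subalgebra_imp_Linf)
  have "AE x in M. \<forall>n. cdist X (\<lambda>_. d n) x \<le> max (cdist X Z x) (nm (Z x - d n))"
    unfolding AE_all_countable by (intro allI cdist_le_max_nm[OF X Z]) simp
  moreover have "AE x in M. \<forall>n. 0 \<le> cdist X (\<lambda>_. d n) x"
    unfolding AE_all_countable by (intro allI cdist_nonneg[OF X d])
  ultimately show ?thesis
    using cdist_nonneg[OF X Z_M]
  proof eventually_elim
    case (elim x)
    let ?c = "cdist X Z x"
    show ?case
    proof (rule ccontr)
      assume "\<not> (INF n. cdist X (\<lambda>_. d n) x) \<le> ?c"
      then have less: "?c < (INF n. cdist X (\<lambda>_. d n) x)"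
        by simp
      then obtain n where n: "nm (Z x - d n) < (INF n. cdist X (\<lambda>_. d n) x) - ?c"
        using dense by force
      have "cdist X (\<lambda>_. d n) x \<le> max ?c (nm (Z x - d n))"
        using elim(1) by blast
      also have "\<dots> < (INF n. cdist X (\<lambda>_. d n) x)"
        using less n elim(3) by simp
      finally have "cdist X (\<lambda>_. d n) x < (INF n. cdist X (\<lambda>_. d n) x)" .
      moreover have "(INF n. cdist X (\<lambda>_. d n) x) \<le> cdist X (\<lambda>_. d n) x"
        using elim by (intro cINF_lower bdd_belowI[of _ 0]) auto
      ultimately show False
        by simp
    qed
  qed
qed

lemma cond_exp_set_nonempty:
  assumes X: "X \<in> Linf M M nm"
  shows "\<exists>U. U \<in> cond_exp_set M G nm X"
proof -
  obtain d :: "nat \<Rightarrow> 'k" where dense: "\<And>x e. 0 < e \<Longrightarrow> \<exists>n. nm (x - d n) < e"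
    using exists_dense_sequence by blast
  obtain U where U: "U \<in> Linf M G nm" and le_INF: "AE x in M. cdist X U x \<le> (INF n. cdist X (\<lambda>_. d n) x)"
    using exists_cdist_le_INF[OF X] by blast
  have "AE x in M. cdist X U x \<le> cdist X Z x" if "Z \<in> Linf M G nm" for Z
  proof -
    have "AE x in M. (INF n. cdist X (\<lambda>_. d n) x) \<le> cdist X Z x"
      using X that dense by (rule INF_cdist_le)
    with le_INF show ?thesis
      by eventually_elim simp
  qed
  with U show ?thesis
    unfolding cond_exp_set_iff by blast
qed

lemma cond_exp_set_switch:
  assumes Y: "Y \<in> Linf M M nm" and U: "U \<in> Linf M G nm" and V0: "V0 \<in> cond_exp_set M G nm Y"
  defines "V y \<equiv> if nm (U y - V0 y) \<le> cdist Y V0 y then U y else V0 y"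
  shows "V \<in> cond_exp_set M G nm Y"
proof -
  have V0_G: "V0 \<in> Linf M G nm" and V0_opt: "\<And>Z. Z \<in> Linf M G nm \<Longrightarrow> AE x in M. cdist Y V0 x \<le> cdist Y Z x"
    using V0 by (simp_all add: cond_exp_set_iff)
  note [measurable] = Linf_borel_measurable[OF U] Linf_borel_measurable[OF V0_G]
  define A where "A = {x \<in> space G. nm (U x - V0 x) \<le> cdist Y V0 x}"
  have A: "A \<in> sets G" and A_compl: "space G - A \<in> sets G"
    unfolding A_def by measurable
  obtain KU KV where "AE x in M. nm (U x) \<le> KU" "AE x in M. nm (V0 x) \<le> KV"
    using Linf_ae_bounded[OF U] Linf_ae_bounded[OF V0_G] by metis
  then have "AE x in M. nm (V x) \<le> max KU KV"
    by eventually_elim (auto simp: V_def)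
  then have V_G: "V \<in> Linf M G nm"
    by (rule Linf_subalgebraI[rotated]) (simp add: V_def)
  have U_M: "U \<in> Linf M M nm" and V0_M: "V0 \<in> Linf M M nm" and V_M: "V \<in> Linf M M nm"
    using U V0_G V_G by (simp_all add: Linf_subalgebra_imp_Linf)
  have "AE x in M. x \<in> A \<longrightarrow> cdist Y V x = cdist Y U x"
    using A by (intro cdist_local_eq[OF Y V_M U_M]) (auto simp: A_def V_def space_G)
  moreover have "AE x in M. x \<in> space G - A \<longrightarrow> cdist Y V x = cdist Y V0 x"
    using A_compl by (intro cdist_local_eq[OF Y V_M V0_M]) (auto simp: A_def V_def space_G)
  moreover have "AE x in M. cdist Y U x \<le> max (cdist Y V0 x) (nm (V0 x - U x))"
    by (rule cdist_le_max_nm[OF Y V0_G U])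
  ultimately have "AE x in M. cdist Y V x \<le> cdist Y V0 x"
    using AE_space by eventually_elim (auto simp: A_def space_G nm_minus_commute[of "V0 _"])
  then have "AE x in M. cdist Y V x \<le> cdist Y Z x" if "Z \<in> Linf M G nm" for Z
    using V0_opt[OF that] by eventually_elim simp
  with V_G show ?thesis
    by (simp add: cond_exp_set_iff)
qed

lemma INF_norm_inf_cond_exp_set_le:
  assumes X: "X \<in> Linf M M nm" and Y: "Y \<in> Linf M M nm" and U: "U \<in> cond_exp_set M G nm X"
  shows "(INF V\<in>cond_exp_set M G nm Y. norm_inf M nm (\<lambda>x. U x - V x)) \<le> norm_inf M nm (\<lambda>x. X x - Y x)"
proof -
  obtain r where "0 \<le> r" and r: "norm_inf M nm (\<lambda>x. X x - Y x) = ereal r"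
    using Linf_norm_inf_real[OF Linf_diff[OF X Y]] by blast
  have "AE x in M. nm (X x - Y x) \<le> r"
    using AE_nm_le_norm_inf[of "\<lambda>x. X x - Y x"] unfolding r by simp
  then have XY: "AE x in M. cdist X Y x \<le> r"
    by (rule cdist_le_const[OF X Y])
  obtain V0 where V0: "V0 \<in> cond_exp_set M G nm Y"
    using cond_exp_set_nonempty[OF Y] by blast
  have U_G: "U \<in> Linf M G nm" and U_opt: "\<And>Z. Z \<in> Linf M G nm \<Longrightarrow> AE x in M. cdist X U x \<le> cdist X Z x"
    and V0_G: "V0 \<in> Linf M G nm"
    using U V0 by (simp_all add: cond_exp_set_iff)
  have U_M: "U \<in> Linf M M nm" and V0_M: "V0 \<in> Linf M M nm"
    using U_G V0_G by (simp_all add: Linf_subalgebra_imp_Linf)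
  define V where "V y = (if nm (U y - V0 y) \<le> cdist Y V0 y then U y else V0 y)" for y
  have V: "V \<in> cond_exp_set M G nm Y"
    unfolding V_def using Y U_G V0 by (rule cond_exp_set_switch)
  have V_M: "V \<in> Linf M M nm"
    using V by (simp add: cond_exp_set_iff Linf_subalgebra_imp_Linf)
  have "AE x in M. nm (U x - V x) \<le> r"
    using U_opt[OF V0_G] cdist_triangle[OF Y X U_M] cdist_triangle[OF X Y V0_M]
      cdist_triangle[OF U_M Y V0_M] cdist_eq_nm[OF U_G V0_G] XY
  proof eventually_elim
    case (elim x)
    show ?case
    proof (cases "nm (U x - V0 x) \<le> cdist Y V0 x")
      case True
      then show ?thesis
        using \<open>0 \<le> r\<close> by (simp add: V_def)
    next
      case False
      text \<open>If also \<open>r < nm (U - V0)\<close>, the ultrametric inequality would give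
        \<open>nm (U - V0) \<le> cdist Y U \<le> cdist X U \<le> cdist X V0 \<le> cdist Y V0 < nm (U - V0)\<close>.\<close>
      with elim show ?thesis
        by (auto simp: V_def cdist_commute[of Y X] cdist_commute[of U Y] max_def split: if_splits)
    qed
  qed
  then have "norm_inf M nm (\<lambda>x. U x - V x) \<le> norm_inf M nm (\<lambda>x. X x - Y x)"
    unfolding r using U_M V_M by (intro norm_inf_le) (auto simp: Linf_def)
  with V show ?thesis
    by (intro INF_lower2)
qed

end

theorem mainTheorem17:
  fixes M G :: "'a measure"
    and nm :: "'k::{field, metric_space, second_countable_topology} \<Rightarrow> real"
    and X Y :: "'a \<Rightarrow> 'k"
  assumes "local_field_abs nm"
    and "prob_space M"
    and "subalgebra M G"
    and "X \<in> Linf M M nm" and "Y \<in> Linf M M nm"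
  shows "hausdorff_dist M nm (cond_exp_set M G nm X) (cond_exp_set M G nm Y)
           \<le> norm_inf M nm (\<lambda>\<omega>. X \<omega> - Y \<omega>)"
proof -
  interpret local_field_subalgebra M G nm
    using assms(1-3)
    by (simp add: local_field_subalgebra_def prob_subalgebra_def prob_subalgebra_axioms_def local_field_def)
  have
    "(INF V\<in>cond_exp_set M G nm Y. norm_inf M nm (\<lambda>x. U x - V x)) \<le> norm_inf M nm (\<lambda>x. X x - Y x)"
    if "U \<in> cond_exp_set M G nm X" for U
    using assms(4,5) that by (rule INF_norm_inf_cond_exp_set_le)
  moreover have
    "(INF U\<in>cond_exp_set M G nm X. norm_inf M nm (\<lambda>x. V x - U x)) \<le> norm_inf M nm (\<lambda>x. X x - Y x)"
    if "V \<in> cond_exp_set M G nm Y" for V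
    using INF_norm_inf_cond_exp_set_le[OF assms(5,4) that] by (simp add: norm_inf_diff_commute[of Y X])
  ultimately show ?thesis
    unfolding hausdorff_dist_def by (auto intro!: SUP_least)
qed

end
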